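(* Let $\Sigma=\{\lambda\in\mathbb Z^3:\lambda_1+\lambda_2+\lambda_3=0\}$. Then $GL_3(F)=\bigcup_{\lambda\in\Sigma}K'F'^\times\lambda(\varpi)K$.
   Context: $F$ is a $p$-adic field with $p\ne2,3$, ring of integers $R$, uniformizer $\varpi$. $F'=F(\varpi')$ with $\varpi'^3=\varpi$, a totally ramified cubic extension with ring of integers $R'$, embedded in $M_3(F)$ via its regular representation on the $R$-basis $\{1,\varpi',\varpi'^2\}$ of $R'$, so that $\varpi'$ corresponds to the matrix with entries $1$ in positions $(2,1)$ and $(3,2)$, $\varpi$ in position $(1,3)$, and $0$ elsewhere; $F'^\times$ is thus a subgroup of $GL_3(F)$. $K=GL_3(R)$, and $K'$ is the lower triangular Iwahori subgroup, i.e. the elements of $K$ whose reduction mod $\varpi$ is lower triangular. $\lambda(\varpi)=\operatorname{diag}(\varpi^{\lambda_1},\varpi^{\lambda_2},\varpi^{\lambda_3})$. *)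

theory Defs
  imports "HOL-Analysis.Analysis"
begin

text \<open>A (normalised) discrete valuation on a field is given by a function
  v :: 'a => int whose values at nonzero elements matter (the value at 0
  is irrelevant and never used; 0 is treated as having valuation +infinity).\<close>

definition discrete_valuation :: "('a::field \<Rightarrow> int) \<Rightarrow> bool" where
  "discrete_valuation v \<longleftrightarrow>
     (\<forall>x y. x \<noteq> 0 \<longrightarrow> y \<noteq> 0 \<longrightarrow> v (x * y) = v x + v y) \<and>
     (\<forall>x y. x \<noteq> 0 \<longrightarrow> y \<noteq> 0 \<longrightarrow> x + y \<noteq> 0 \<longrightarrow> v (x + y) \<ge> min (v x) (v y)) \<and>
     (\<exists>x. x \<noteq> 0 \<and> v x = 1)"

definition val_ring :: "('a::field \<Rightarrow> int) \<Rightarrow> 'a set" where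
  "val_ring v = {x. x = 0 \<or> 0 \<le> v x}"

definition val_ideal :: "('a::field \<Rightarrow> int) \<Rightarrow> 'a set" where
  "val_ideal v = {x. x = 0 \<or> 1 \<le> v x}"

definition residue_field :: "('a::field \<Rightarrow> int) \<Rightarrow> 'a set set" where
  "residue_field v = val_ring v // {(x, y). x \<in> val_ring v \<and> y \<in> val_ring v \<and> x - y \<in> val_ideal v}"

definition val_cauchy :: "('a::field \<Rightarrow> int) \<Rightarrow> (nat \<Rightarrow> 'a) \<Rightarrow> bool" where
  "val_cauchy v x \<longleftrightarrow> (\<forall>N::int. \<exists>M. \<forall>m\<ge>M. \<forall>n\<ge>M. x m = x n \<or> v (x m - x n) \<ge> N)"

definition val_converges :: "('a::field \<Rightarrow> int) \<Rightarrow> (nat \<Rightarrow> 'a) \<Rightarrow> 'a \<Rightarrow> bool" where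
  "val_converges v x L \<longleftrightarrow> (\<forall>N::int. \<exists>M. \<forall>n\<ge>M. x n = L \<or> v (x n - L) \<ge> N)"

definition val_complete :: "('a::field \<Rightarrow> int) \<Rightarrow> bool" where
  "val_complete v \<longleftrightarrow> (\<forall>x. val_cauchy v x \<longrightarrow> (\<exists>L. val_converges v x L))"

text \<open>A p-adic field (finite extension of Q_p) is the same as a field of
  characteristic 0, complete for a discrete valuation, with finite residue
  field of characteristic p.\<close>
definition p_adic_field :: "('a::field_char_0 \<Rightarrow> int) \<Rightarrow> nat \<Rightarrow> bool" where
  "p_adic_field v p \<longleftrightarrow> discrete_valuation v \<and> val_complete v \<and>
     finite (residue_field v) \<and> prime p \<and> of_nat p \<in> val_ideal v"

definition uniformizer :: "('a::field \<Rightarrow> int) \<Rightarrow> 'a \<Rightarrow> bool" where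
  "uniformizer v w \<longleftrightarrow> w \<noteq> 0 \<and> v w = 1"

text \<open>3x3 matrices are indexed by the type 3, whose elements are written
  1, 2, 3 (here 3 = 0 in the numeral type, but 1,2,3 are distinct).\<close>

type_synonym 'a mat3 = "'a ^ 3 ^ 3"

definition GL3 :: "'a::field mat3 set" where
  "GL3 = {g. invertible g}"

definition Kmax :: "('a::field \<Rightarrow> int) \<Rightarrow> 'a mat3 set" where
  "Kmax v = {g. invertible g \<and> (\<forall>i j. g $ i $ j \<in> val_ring v)
                 \<and> (\<forall>i j. matrix_inv g $ i $ j \<in> val_ring v)}"

text \<open>K' = lower triangular Iwahori: elements of K whose reduction mod varpi
  is lower triangular, i.e. entries strictly above the diagonal lie in (varpi).\<close>
definition Iwahori :: "('a::field \<Rightarrow> int) \<Rightarrow> 'a mat3 set" where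
  "Iwahori v = {g \<in> Kmax v. g $ 1 $ 2 \<in> val_ideal v \<and> g $ 1 $ 3 \<in> val_ideal v
                               \<and> g $ 2 $ 3 \<in> val_ideal v}"

text \<open>The matrix of multiplication by varpi' = varpi^(1/3) on the basis
  1, varpi', varpi'^2: entries 1 at (2,1), (3,2), varpi at (1,3), 0 elsewhere.\<close>
definition varpi'_mat :: "'a::field \<Rightarrow> 'a mat3" where
  "varpi'_mat w = (\<chi> i j. if i = 2 \<and> j = 1 then 1
                          else if i = 3 \<and> j = 2 then 1
                          else if i = 1 \<and> j = 3 then w else 0)"

text \<open>F'^x embedded in GL_3(F): images a + b varpi' + c varpi'^2, not all zero.\<close>
definition F'_units :: "'a::field \<Rightarrow> 'a mat3 set" where
  "F'_units w =
     {(\<chi> i j. a * mat 1 $ i $ j + b * varpi'_mat w $ i $ j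
               + c * (varpi'_mat w ** varpi'_mat w) $ i $ j) | a b c.
        \<not> (a = 0 \<and> b = 0 \<and> c = 0)}"

definition lam_mat :: "'a::field \<Rightarrow> int \<times> int \<times> int \<Rightarrow> 'a mat3" where
  "lam_mat w lam = (case lam of (l1, l2, l3) \<Rightarrow>
     (\<chi> i j. if i = j then (if i = 1 then w powi l1 else if i = 2 then w powi l2 else w powi l3)
             else 0))"

definition Sigma0 :: "(int \<times> int \<times> int) set" where
  "Sigma0 = {(l1, l2, l3). l1 + l2 + l3 = 0}"

end

theory Submission
  imports Defs
begin

(*
  Row operations from K' on the left and column operations from K on the right reduce every
  g in GL_3(F) to a monomial matrix. Among the rows not yet treated, take as pivot an entry of
  minimal valuation, lowest row first among ties, and clear its row and column: by minimality
  the row operations have integral coefficients, divisible by varpi above the diagonal, so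
  they lie in K'. Since diagonal units lie in K' and permutation matrices in K, a monomial
  matrix is determined up to K' _ K by the valuations m_1, m_2, m_3 of its nonzero entries, row
  by row. If m_1 + m_2 + m_3 = 3q + k with k in {0, 1, 2}, then varpi^q varpi'^k lam(varpi) is
  such a monomial matrix for a suitable lam in Sigma.

  Conversely, a + b varpi' + c varpi'^2 has determinant a^3 + varpi b^3 + varpi^2 c^3 - 3 varpi abc.
  The valuations of its first three terms lie in distinct classes mod 3, and the last term has
  valuation at least their mean, hence above their minimum: the term of least valuation
  dominates, so the determinant is nonzero.
*)

section \<open>Monomial and elementary matrices\<close>

lemma matrix_mult_3_entry:
  "((A::'a::comm_ring_1 mat3) ** B) $ i $ j = A$i$1 * B$1$j + A$i$2 * B$2$j + A$i$3 * B$3$j"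
  by (simp add: matrix_matrix_mult_def sum_3)

lemma matrix_inv_eqI:
  fixes A B :: "'a::field^'n^'n"
  assumes "A ** B = mat 1"
  shows "matrix_inv A = B"
proof -
  have BA: "B ** A = mat 1" using assms matrix_left_right_inverse by blast
  have "A ** matrix_inv A = mat 1 \<and> matrix_inv A ** A = mat 1"
    unfolding matrix_inv_def by (rule someI[of _ B]) (use assms BA in blast)
  then have "matrix_inv A = matrix_inv A ** (A ** B)" using assms by simp
  also have "\<dots> = B" using \<open>A ** matrix_inv A = mat 1 \<and> matrix_inv A ** A = mat 1\<close>
    by (simp add: matrix_mul_assoc)
  finally show ?thesis .
qed

lemma invertible_row_nonzero:
  fixes A :: "'a::field^'n^'n"
  assumes "invertible A"
  obtains j where "A $ i $ j \<noteq> 0"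
proof -
  obtain B where "A ** B = mat 1" using assms unfolding invertible_def by blast
  then have "(\<Sum>j\<in>UNIV. A $ i $ j * B $ j $ i) = 1"
    unfolding matrix_matrix_mult_def by (simp add: vec_eq_iff mat_def)
  then show ?thesis using that by (metis (no_types, lifting) mult_zero_left sum.neutral zero_neq_one)
qed

definition monomial_mat :: "('n \<Rightarrow> 'n) \<Rightarrow> ('n \<Rightarrow> 'a::zero) \<Rightarrow> 'a^'n^'n" where
  "monomial_mat \<sigma> e = (\<chi> i j. if j = \<sigma> i then e i else 0)"

lemma monomial_mat_entry: "monomial_mat \<sigma> e $ i $ j = (if j = \<sigma> i then e i else 0)"
  by (simp add: monomial_mat_def)

lemma monomial_mat_mult:
  fixes e f :: "'n::finite \<Rightarrow> 'a::semiring_1"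
  shows "monomial_mat \<sigma> e ** monomial_mat \<tau> f = monomial_mat (\<tau> \<circ> \<sigma>) (\<lambda>i. e i * f (\<sigma> i))"
proof -
  have "(\<Sum>k\<in>UNIV. (if k = \<sigma> i then e i else 0) * (if j = \<tau> k then f k else 0))
      = (\<Sum>k\<in>UNIV. if k = \<sigma> i then e i * (if j = \<tau> (\<sigma> i) then f (\<sigma> i) else 0) else 0)" for i j
    by (rule sum.cong) auto
  then show ?thesis
    by (simp add: vec_eq_iff matrix_matrix_mult_def monomial_mat_entry)
qed

lemma monomial_mat_id_one: "monomial_mat id (\<lambda>_. 1) = (mat 1 :: 'a::zero_neq_one^'n^'n)"
  by (simp add: vec_eq_iff monomial_mat_entry mat_def)

lemma monomial_mat_inverse:
  fixes e :: "'n::finite \<Rightarrow> 'a::field"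
  assumes "bij \<sigma>" "\<And>i. e i \<noteq> 0"
  shows "monomial_mat \<sigma> e ** monomial_mat (inv \<sigma>) (\<lambda>j. inverse (e (inv \<sigma> j))) = mat 1"
proof -
  have "inv \<sigma> \<circ> \<sigma> = id" and "\<And>i. inv \<sigma> (\<sigma> i) = i"
    using assms(1) by (simp_all add: bij_is_inj)
  then show ?thesis
    using assms(2) by (simp add: monomial_mat_mult flip: monomial_mat_id_one)
qed

lemma invertible_monomial_mat:
  fixes e :: "'n::finite \<Rightarrow> 'a::field"
  assumes "bij \<sigma>" "\<And>i. e i \<noteq> 0"
  shows "invertible (monomial_mat \<sigma> e)"
  unfolding invertible_right_inverse using monomial_mat_inverse[OF assms] by (rule exI)

definition add_row_mat :: "'n \<Rightarrow> ('n \<Rightarrow> 'a::zero_neq_one) \<Rightarrow> 'a^'n^'n" where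
  "add_row_mat i0 c = (\<chi> a b. if a = b then 1 else if b = i0 then c a else 0)"

definition add_col_mat :: "'n \<Rightarrow> ('n \<Rightarrow> 'a::zero_neq_one) \<Rightarrow> 'a^'n^'n" where
  "add_col_mat j0 d = (\<chi> a b. if a = b then 1 else if a = j0 then d b else 0)"

lemma add_row_mat_mult_entry:
  fixes A :: "'a::comm_ring_1^'n::finite^'n"
  shows "(add_row_mat i0 c ** A) $ a $ b = A $ a $ b + (if a \<noteq> i0 then c a * A $ i0 $ b else 0)"
proof -
  have "(\<Sum>k\<in>UNIV. (if a = k then 1 else if k = i0 then c a else 0) * A $ k $ b)
      = (\<Sum>k\<in>UNIV. (if a = k then A $ k $ b else 0) + (if a \<noteq> i0 \<and> k = i0 then c a * A $ k $ b else 0))"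
    by (rule sum.cong) auto
  then show ?thesis
    by (simp add: add_row_mat_def matrix_matrix_mult_def sum.distrib)
qed

lemma add_col_mat_mult_entry:
  fixes A :: "'a::comm_ring_1^'n::finite^'n"
  shows "(A ** add_col_mat j0 d) $ a $ b = A $ a $ b + (if b \<noteq> j0 then A $ a $ j0 * d b else 0)"
proof -
  have "(\<Sum>k\<in>UNIV. A $ a $ k * (if k = b then 1 else if k = j0 then d b else 0))
      = (\<Sum>k\<in>UNIV. (if k = b then A $ a $ k else 0) + (if b \<noteq> j0 \<and> k = j0 then A $ a $ k * d b else 0))"
    by (rule sum.cong) auto
  then show ?thesis
    by (simp add: add_col_mat_def matrix_matrix_mult_def sum.distrib)
qed

lemma add_row_mat_inverse:
  fixes c :: "'n::finite \<Rightarrow> 'a::comm_ring_1"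
  shows "add_row_mat i0 c ** add_row_mat i0 (\<lambda>a. - c a) = mat 1"
  by (simp add: vec_eq_iff add_row_mat_mult_entry) (simp add: add_row_mat_def mat_def)

lemma add_col_mat_inverse:
  fixes d :: "'n::finite \<Rightarrow> 'a::comm_ring_1"
  shows "add_col_mat j0 d ** add_col_mat j0 (\<lambda>b. - d b) = mat 1"
    and "add_col_mat j0 (\<lambda>b. - d b) ** add_col_mat j0 d = mat 1"
  by (simp_all add: vec_eq_iff add_col_mat_mult_entry) (simp_all add: add_col_mat_def mat_def)

lemma invertible_add_row_mat: "invertible (add_row_mat i0 (c :: 'n::finite \<Rightarrow> 'a::field))"
  unfolding invertible_right_inverse using add_row_mat_inverse by (rule exI)

lemma invertible_add_col_mat: "invertible (add_col_mat j0 (d :: 'n::finite \<Rightarrow> 'a::field))"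
  unfolding invertible_right_inverse using add_col_mat_inverse(1) by (rule exI)

section \<open>Clearing pivots\<close>

definition cleared_pivots :: "('n \<times> 'n) set \<Rightarrow> 'a::zero^'n^'n \<Rightarrow> bool" where
  "cleared_pivots P A \<longleftrightarrow> (\<forall>i j. (i, j) \<in> P \<longrightarrow> A $ i $ j \<noteq> 0
      \<and> (\<forall>j'. A $ i $ j' \<noteq> 0 \<longrightarrow> j' = j) \<and> (\<forall>i'. A $ i' $ j \<noteq> 0 \<longrightarrow> i' = i))"

lemma cleared_pivotsD:
  assumes "cleared_pivots P A" "(i, j) \<in> P"
  shows "A $ i $ j \<noteq> 0" "A $ i $ j' \<noteq> 0 \<Longrightarrow> j' = j" "A $ i' $ j \<noteq> 0 \<Longrightarrow> i' = i"
  using assms unfolding cleared_pivots_def by blast+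

lemma cleared_pivots_free_column:
  assumes "cleared_pivots P A" "i0 \<notin> fst ` P" "A $ i0 $ j0 \<noteq> 0"
  shows "(i, j0) \<notin> P" and "A $ a $ j0 \<noteq> 0 \<Longrightarrow> a \<notin> fst ` P"
proof -
  show "(i, j0) \<notin> P"
  proof
    assume "(i, j0) \<in> P"
    then have "i0 = i" using assms(1,3) unfolding cleared_pivots_def by blast
    then show False using \<open>(i, j0) \<in> P\<close> assms(2) by force
  qed
  show "a \<notin> fst ` P" if "A $ a $ j0 \<noteq> 0"
  proof
    assume "a \<in> fst ` P"
    then obtain j where "(a, j) \<in> P" by force
    with assms(1) that have "j0 = j" unfolding cleared_pivots_def by blast
    then have "i0 = a" using \<open>(a, j) \<in> P\<close> assms(1,3) unfolding cleared_pivots_def by blast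
    then show False using \<open>a \<in> fst ` P\<close> assms(2) by simp
  qed
qed

lemma cleared_pivots_insert:
  fixes A :: "'a::field^'n::finite^'n"
  assumes cl: "cleared_pivots P A" and i0: "i0 \<notin> fst ` P" and p: "A $ i0 $ j0 \<noteq> 0"
  defines "A' \<equiv> add_row_mat i0 (\<lambda>a. - (A $ a $ j0 / A $ i0 $ j0)) ** A
                  ** add_col_mat j0 (\<lambda>b. - (A $ i0 $ b / A $ i0 $ j0))"
  shows "cleared_pivots (insert (i0, j0) P) A'"
proof -
  have A'_entry: "A' $ a $ b = (if a = i0 then (if b = j0 then A $ i0 $ j0 else 0)
      else if b = j0 then 0 else A $ a $ b - A $ a $ j0 * A $ i0 $ b / A $ i0 $ j0)" for a b
    unfolding A'_def add_col_mat_mult_entry add_row_mat_mult_entry using p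
    by (auto simp: field_simps)
  have old_pivot: "A' $ i $ j \<noteq> 0 \<and> (\<forall>j'. A' $ i $ j' \<noteq> 0 \<longrightarrow> j' = j)
      \<and> (\<forall>i'. A' $ i' $ j \<noteq> 0 \<longrightarrow> i' = i)"
    if "(i, j) \<in> P" for i j
  proof -
    have "i \<noteq> i0" using that i0 by force
    have "j \<noteq> j0" using that cleared_pivots_free_column(1)[OF cl i0 p] by blast
    note pivot = cleared_pivotsD[OF cl that]
    have "A $ i $ j0 = 0" "A $ i0 $ j = 0"
      using pivot(2)[of j0] pivot(3)[of i0] \<open>i \<noteq> i0\<close> \<open>j \<noteq> j0\<close> by blast+
    then have row: "A' $ i $ j' = (if j' = j0 then 0 else A $ i $ j')"
      and col: "A' $ i' $ j = (if i' = i0 then 0 else A $ i' $ j)" for i' j'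
      using \<open>i \<noteq> i0\<close> \<open>j \<noteq> j0\<close> unfolding A'_entry by simp_all
    show ?thesis
    proof (intro conjI allI impI)
      show "A' $ i $ j \<noteq> 0" using pivot(1) \<open>i \<noteq> i0\<close> col[of i] by simp
      show "j' = j" if "A' $ i $ j' \<noteq> 0" for j'
        using that pivot(2)[of j'] row[of j'] by (simp split: if_splits)
      show "i' = i" if "A' $ i' $ j \<noteq> 0" for i'
        using that pivot(3)[of i'] col[of i'] by (simp split: if_splits)
    qed
  qed
  have "A' $ i0 $ j0 \<noteq> 0 \<and> (\<forall>j'. A' $ i0 $ j' \<noteq> 0 \<longrightarrow> j' = j0)
      \<and> (\<forall>i'. A' $ i' $ j0 \<noteq> 0 \<longrightarrow> i' = i0)"
    using p unfolding A'_entry by simp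
  with old_pivot show ?thesis
    unfolding cleared_pivots_def by blast
qed

lemma obtain_lex_min:
  fixes f g :: "'b \<Rightarrow> 'c::linorder"
  assumes "finite S" "S \<noteq> {}"
  obtains s where "s \<in> S" "\<And>t. t \<in> S \<Longrightarrow> f s \<le> f t"
    "\<And>t. t \<in> S \<Longrightarrow> f t = f s \<Longrightarrow> g s \<le> g t"
proof -
  define S' where "S' = {s \<in> S. f s = Min (f ` S)}"
  have "Min (f ` S) \<in> f ` S" using assms by simp
  then have "finite S'" "S' \<noteq> {}"
    using assms(1) unfolding S'_def by auto
  then have "Min (g ` S') \<in> g ` S'" by simp
  then obtain s where s: "s \<in> S'" "g s = Min (g ` S')" by force
  show ?thesis
  proof
    show "s \<in> S" "\<And>t. t \<in> S \<Longrightarrow> f s \<le> f t"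
      using s assms(1) unfolding S'_def by auto
    show "g s \<le> g t" if "t \<in> S" "f t = f s" for t
      using s that \<open>finite S'\<close> unfolding S'_def by auto
  qed
qed

lemma cleared_pivots_monomial:
  fixes A :: "'a::zero^'n::finite^'n"
  assumes cl: "cleared_pivots P A" and full: "fst ` P = UNIV"
  obtains \<sigma> e where "bij \<sigma>" "\<And>i. e i \<noteq> 0" "A = monomial_mat \<sigma> e"
proof -
  define \<sigma> where "\<sigma> i = (SOME j. (i, j) \<in> P)" for i
  have pivot: "(i, \<sigma> i) \<in> P" for i
  proof -
    obtain j where "(i, j) \<in> P" using full by (metis UNIV_I fst_eqD imageE surj_pair)
    then show ?thesis unfolding \<sigma>_def by (rule someI)
  qed
  have "inj \<sigma>"
  proof (rule injI)
    fix i i' assume "\<sigma> i = \<sigma> i'"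
    then show "i = i'"
      using cleared_pivotsD(1)[OF cl pivot[of i]] cleared_pivotsD(3)[OF cl pivot[of i']] by metis
  qed
  then have "bij \<sigma>" by (simp add: bij_def finite_UNIV_inj_surj)
  moreover have "A = monomial_mat \<sigma> (\<lambda>i. A $ i $ \<sigma> i)"
    unfolding vec_eq_iff monomial_mat_entry using cleared_pivotsD(2)[OF cl pivot] by metis
  ultimately show ?thesis using that[of \<sigma> "\<lambda>i. A $ i $ \<sigma> i"] cleared_pivotsD(1)[OF cl pivot] by blast
qed

section \<open>Discrete valuations\<close>

locale discretely_valued =
  fixes v :: "'a::field \<Rightarrow> int"
  assumes discrete_valuation: "discrete_valuation v"
begin

lemma valuation_mult: "x \<noteq> 0 \<Longrightarrow> y \<noteq> 0 \<Longrightarrow> v (x * y) = v x + v y"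
  using discrete_valuation unfolding discrete_valuation_def by blast

lemma valuation_add_ge_min: "x \<noteq> 0 \<Longrightarrow> y \<noteq> 0 \<Longrightarrow> x + y \<noteq> 0 \<Longrightarrow> min (v x) (v y) \<le> v (x + y)"
  using discrete_valuation unfolding discrete_valuation_def by blast

lemma valuation_one: "v 1 = 0"
  using valuation_mult[of 1 1] by simp

lemma valuation_uminus: "v (- x) = v x"
proof (cases "x = 0")
  case False
  have "v (-1) = 0" using valuation_mult[of "-1" "-1"] valuation_one by simp
  then show ?thesis using valuation_mult[of "-1" x] False by simp
qed simp

lemma valuation_inverse: "x \<noteq> 0 \<Longrightarrow> v (inverse x) = - v x"
  using valuation_mult[of x "inverse x"] valuation_one by simp

lemma valuation_divide: "x \<noteq> 0 \<Longrightarrow> y \<noteq> 0 \<Longrightarrow> v (x / y) = v x - v y"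
  by (simp add: divide_inverse valuation_mult valuation_inverse)

lemma valuation_power: "x \<noteq> 0 \<Longrightarrow> v (x ^ n) = int n * v x"
  by (induction n) (auto simp: valuation_one valuation_mult algebra_simps)

lemma valuation_power_int: "x \<noteq> 0 \<Longrightarrow> v (x powi n) = n * v x"
  by (cases "n \<ge> 0")
    (auto simp: power_int_def valuation_power valuation_inverse power_inverse[symmetric])

lemma valuation_add_gt:
  assumes "x = 0 \<or> n < v x" "y = 0 \<or> n < v y"
  shows "x + y = 0 \<or> n < v (x + y)"
  using assms valuation_add_ge_min[of x y] by fastforce

lemma add_nonzero_of_valuation_less:
  assumes "x \<noteq> 0" "y = 0 \<or> v x < v y"
  shows "x + y \<noteq> 0"
proof
  assume "x + y = 0"
  then have "y = - x" by (simp add: eq_neg_iff_add_eq_0 add.commute)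
  then show False using assms valuation_uminus[of x] by auto
qed

lemma val_ring_add: "x \<in> val_ring v \<Longrightarrow> y \<in> val_ring v \<Longrightarrow> x + y \<in> val_ring v"
  unfolding val_ring_def using valuation_add_gt[of x "-1" y] by auto

lemma val_ring_mult: "x \<in> val_ring v \<Longrightarrow> y \<in> val_ring v \<Longrightarrow> x * y \<in> val_ring v"
  unfolding val_ring_def by (cases "x = 0"; cases "y = 0") (auto simp: valuation_mult)

lemma val_ring_uminus: "x \<in> val_ring v \<Longrightarrow> - x \<in> val_ring v"
  unfolding val_ring_def by (simp add: valuation_uminus)

lemma zero_in_val_ring: "0 \<in> val_ring v" and one_in_val_ring: "1 \<in> val_ring v"
  unfolding val_ring_def by (simp_all add: valuation_one)

lemma of_nat_in_val_ring: "of_nat n \<in> val_ring v"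
  by (induction n) (auto intro: val_ring_add zero_in_val_ring one_in_val_ring)

lemma zero_in_val_ideal: "0 \<in> val_ideal v"
  unfolding val_ideal_def by simp

lemma val_ideal_add: "x \<in> val_ideal v \<Longrightarrow> y \<in> val_ideal v \<Longrightarrow> x + y \<in> val_ideal v"
  unfolding val_ideal_def using valuation_add_gt[of x 0 y] by auto

lemma val_ideal_mult_left: "x \<in> val_ring v \<Longrightarrow> y \<in> val_ideal v \<Longrightarrow> x * y \<in> val_ideal v"
  unfolding val_ring_def val_ideal_def by (cases "x = 0"; cases "y = 0") (auto simp: valuation_mult)

lemma val_ideal_mult_right: "x \<in> val_ideal v \<Longrightarrow> y \<in> val_ring v \<Longrightarrow> x * y \<in> val_ideal v"
  using val_ideal_mult_left[of y x] by (simp add: mult.commute)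

lemma divide_in_val_ring: "y \<noteq> 0 \<Longrightarrow> x = 0 \<or> v y \<le> v x \<Longrightarrow> x / y \<in> val_ring v"
  unfolding val_ring_def by (cases "x = 0") (auto simp: valuation_divide)

lemma divide_in_val_ideal: "y \<noteq> 0 \<Longrightarrow> x = 0 \<or> v y < v x \<Longrightarrow> x / y \<in> val_ideal v"
  unfolding val_ideal_def by (cases "x = 0") (auto simp: valuation_divide)

end

section \<open>The groups K and K'\<close>

definition integral_mat :: "('a::field \<Rightarrow> int) \<Rightarrow> 'a^'n^'m \<Rightarrow> bool" where
  "integral_mat v A \<longleftrightarrow> (\<forall>i j. A $ i $ j \<in> val_ring v)"

(* The numeral type 3 has 3 = 0 and is ordered 3 < 1 < 2; index3 is the row order 1 < 2 < 3. *)
definition index3 :: "3 \<Rightarrow> int" where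
  "index3 i = (if i = 1 then 1 else if i = 2 then 2 else 3)"

lemma Kmax_intro:
  assumes "A ** B = mat 1" "integral_mat v A" "integral_mat v B"
  shows "A \<in> Kmax v"
  using assms matrix_inv_eqI[OF assms(1)] invertible_right_inverse[of A]
  unfolding Kmax_def integral_mat_def by auto

lemma Kmax_invertible: "A \<in> Kmax v \<Longrightarrow> invertible A"
  unfolding Kmax_def by simp

lemma Iwahori_subset_Kmax: "Iwahori v \<subseteq> Kmax v"
  unfolding Iwahori_def by auto

context discretely_valued
begin

lemma integral_mat_mult:
  fixes A B :: "'a mat3"
  shows "integral_mat v A \<Longrightarrow> integral_mat v B \<Longrightarrow> integral_mat v (A ** B)"
  unfolding integral_mat_def matrix_mult_3_entry
  by (blast intro: val_ring_add val_ring_mult)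

lemma Kmax_mult:
  assumes "A \<in> Kmax v" "B \<in> Kmax v"
  shows "A ** B \<in> Kmax v"
proof (rule Kmax_intro)
  have "A ** matrix_inv A = mat 1" "B ** matrix_inv B = mat 1"
    using assms unfolding Kmax_def invertible_def matrix_inv_def by (auto intro: someI2_ex)
  then show "(A ** B) ** (matrix_inv B ** matrix_inv A) = mat 1"
    by (metis matrix_mul_assoc matrix_mul_rid)
  have "integral_mat v A" "integral_mat v (matrix_inv A)"
    "integral_mat v B" "integral_mat v (matrix_inv B)"
    using assms unfolding Kmax_def integral_mat_def by auto
  then show "integral_mat v (A ** B)" "integral_mat v (matrix_inv B ** matrix_inv A)"
    by (simp_all add: integral_mat_mult)
qed

lemma Iwahori_mult:
  assumes "A \<in> Iwahori v" "B \<in> Iwahori v"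
  shows "A ** B \<in> Iwahori v"
proof -
  have R: "A $ i $ j \<in> val_ring v" "B $ i $ j \<in> val_ring v" for i j
    using assms unfolding Iwahori_def Kmax_def by auto
  have I: "A $ 1 $ 2 \<in> val_ideal v" "A $ 1 $ 3 \<in> val_ideal v" "A $ 2 $ 3 \<in> val_ideal v"
    "B $ 1 $ 2 \<in> val_ideal v" "B $ 1 $ 3 \<in> val_ideal v" "B $ 2 $ 3 \<in> val_ideal v"
    using assms unfolding Iwahori_def by auto
  have "(A ** B) $ 1 $ 2 \<in> val_ideal v" "(A ** B) $ 1 $ 3 \<in> val_ideal v"
    "(A ** B) $ 2 $ 3 \<in> val_ideal v"
    unfolding matrix_mult_3_entry using R I
    by (intro val_ideal_add;
        blast intro: val_ideal_mult_left val_ideal_mult_right)+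
  then show ?thesis
    using Kmax_mult assms Iwahori_subset_Kmax unfolding Iwahori_def by blast
qed

lemma monomial_mat_in_Kmax:
  assumes "bij \<sigma>" "\<And>i. e i \<noteq> 0" "\<And>i. v (e i) = 0"
  shows "monomial_mat \<sigma> e \<in> Kmax v"
proof (rule Kmax_intro[OF monomial_mat_inverse[OF assms(1,2)]])
  have "e i \<in> val_ring v" "inverse (e i) \<in> val_ring v" for i
    using assms(2,3) unfolding val_ring_def by (simp_all add: valuation_inverse)
  then show "integral_mat v (monomial_mat \<sigma> e)"
    "integral_mat v (monomial_mat (inv \<sigma>) (\<lambda>j. inverse (e (inv \<sigma> j))))"
    unfolding integral_mat_def monomial_mat_entry by (auto simp: zero_in_val_ring)
qed

lemma diagonal_unit_mat_in_Iwahori: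
  assumes "\<And>i. e i \<noteq> 0" "\<And>i. v (e i) = 0"
  shows "monomial_mat id e \<in> Iwahori v"
  using monomial_mat_in_Kmax[OF bij_id assms] zero_in_val_ideal
  unfolding Iwahori_def by (simp add: monomial_mat_entry)

lemma mat_1_in_Iwahori: "mat 1 \<in> Iwahori v"
  using diagonal_unit_mat_in_Iwahori[of "\<lambda>_. 1"] valuation_one
  by (simp add: monomial_mat_id_one)

lemma add_row_mat_in_Iwahori:
  assumes "\<And>a. c a \<in> val_ring v" "\<And>a. index3 a < index3 i0 \<Longrightarrow> c a \<in> val_ideal v"
  shows "add_row_mat i0 c \<in> Iwahori v"
proof -
  have "add_row_mat i0 c \<in> Kmax v"
    using assms(1) val_ring_uminus
      zero_in_val_ring one_in_val_ring
    by (intro Kmax_intro[OF add_row_mat_inverse]) (simp_all add: integral_mat_def add_row_mat_def)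
  then show ?thesis
    using assms(2) zero_in_val_ideal exhaust_3[of i0]
    unfolding Iwahori_def by (auto simp: add_row_mat_def index3_def)
qed

lemma add_col_mat_in_Kmax:
  assumes "\<And>b. d b \<in> val_ring v"
  shows "add_col_mat j0 d \<in> Kmax v"
  using assms val_ring_uminus
    zero_in_val_ring one_in_val_ring
  by (intro Kmax_intro[OF add_col_mat_inverse(1)]) (simp_all add: integral_mat_def add_col_mat_def)

end

section \<open>Reduction to monomial matrices\<close>

context discretely_valued
begin

lemma obtain_pivot:
  fixes A :: "'a mat3"
  assumes inv: "invertible A" and cl: "cleared_pivots P A" and "fst ` P \<noteq> UNIV"
  obtains i0 j0 where "i0 \<notin> fst ` P" "A $ i0 $ j0 \<noteq> 0"
    "\<And>a. A $ a $ j0 / A $ i0 $ j0 \<in> val_ring v"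
    "\<And>a. index3 a < index3 i0 \<Longrightarrow> A $ a $ j0 / A $ i0 $ j0 \<in> val_ideal v"
    "\<And>b. A $ i0 $ b / A $ i0 $ j0 \<in> val_ring v"
proof -
  define S where "S = {(i, j). i \<notin> fst ` P \<and> A $ i $ j \<noteq> 0}"
  obtain i1 where "i1 \<notin> fst ` P" using assms(3) by blast
  moreover obtain j1 where "A $ i1 $ j1 \<noteq> 0" using invertible_row_nonzero[OF inv] by blast
  ultimately have "S \<noteq> {}" unfolding S_def by blast
  have "finite S" by simp
  \<comment> \<open>Minimal valuation first, then the lowest row: this is what puts the row operations in K'.\<close>
  obtain s where s: "s \<in> S" "\<And>t. t \<in> S \<Longrightarrow> v (A $ fst s $ snd s) \<le> v (A $ fst t $ snd t)"
    "\<And>t. t \<in> S \<Longrightarrow> v (A $ fst t $ snd t) = v (A $ fst s $ snd s)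
      \<Longrightarrow> index3 (fst s) \<le> index3 (fst t)"
    by (rule obtain_lex_min[OF \<open>finite S\<close> \<open>S \<noteq> {}\<close>, where f = "\<lambda>t. v (A $ fst t $ snd t)"
          and g = "\<lambda>t. index3 (fst t)"]) blast
  obtain i0 j0 where s_eq: "s = (i0, j0)" by force
  define p where "p = A $ i0 $ j0"
  have p: "p \<noteq> 0" and i0: "i0 \<notin> fst ` P" using s(1) unfolding s_eq S_def p_def by auto
  have min_val: "v p \<le> v (A $ i $ j)" and min_row: "v (A $ i $ j) = v p \<Longrightarrow> index3 i0 \<le> index3 i"
    if "(i, j) \<in> S" for i j
    using s(2,3)[OF that] unfolding s_eq p_def by simp_all
  have column: "A $ a $ j0 = 0 \<or> (a, j0) \<in> S" for a
    using cleared_pivots_free_column(2)[OF cl i0 p[unfolded p_def]] unfolding S_def by blast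
  have "A $ a $ j0 = 0 \<or> v p \<le> v (A $ a $ j0)"
    and "index3 a < index3 i0 \<Longrightarrow> A $ a $ j0 = 0 \<or> v p < v (A $ a $ j0)" for a
    using column[of a] min_val[of a j0] min_row[of a j0] by (auto simp: less_le)
  moreover have "A $ i0 $ b = 0 \<or> v p \<le> v (A $ i0 $ b)" for b
    using i0 min_val[of i0 b] unfolding S_def by blast
  ultimately show ?thesis
    using that[OF i0 p[unfolded p_def]] p unfolding p_def
    by (simp add: divide_in_val_ring divide_in_val_ideal)
qed

lemma pivot_step:
  fixes A :: "'a mat3"
  assumes inv: "invertible A" and cl: "cleared_pivots P A" and "fst ` P \<noteq> UNIV"
  obtains L A' M i0 j0 where "L \<in> Iwahori v" "M \<in> Kmax v" "A = L ** A' ** M" "invertible A'"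
    "cleared_pivots (insert (i0, j0) P) A'" "i0 \<notin> fst ` P"
proof -
  obtain i0 j0 where i0: "i0 \<notin> fst ` P" and p: "A $ i0 $ j0 \<noteq> 0"
    and c: "\<And>a. A $ a $ j0 / A $ i0 $ j0 \<in> val_ring v"
      "\<And>a. index3 a < index3 i0 \<Longrightarrow> A $ a $ j0 / A $ i0 $ j0 \<in> val_ideal v"
    and d: "\<And>b. A $ i0 $ b / A $ i0 $ j0 \<in> val_ring v"
    using obtain_pivot[OF assms] by blast
  define c where "c = (\<lambda>a. A $ a $ j0 / A $ i0 $ j0)"
  define d where "d = (\<lambda>b. A $ i0 $ b / A $ i0 $ j0)"
  define A' where "A' = add_row_mat i0 (\<lambda>a. - c a) ** A ** add_col_mat j0 (\<lambda>b. - d b)"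
  have "add_row_mat i0 c ** A' ** add_col_mat j0 d
      = (add_row_mat i0 c ** add_row_mat i0 (\<lambda>a. - c a)) ** A
        ** (add_col_mat j0 (\<lambda>b. - d b) ** add_col_mat j0 d)"
    unfolding A'_def by (simp only: matrix_mul_assoc)
  also have "\<dots> = A"
    by (simp add: add_row_mat_inverse add_col_mat_inverse(2))
  finally have "A = add_row_mat i0 c ** A' ** add_col_mat j0 d" ..
  moreover have "invertible A'"
    unfolding A'_def by (intro invertible_mult invertible_add_row_mat invertible_add_col_mat inv)
  moreover have "add_row_mat i0 c \<in> Iwahori v" "add_col_mat j0 d \<in> Kmax v"
    unfolding c_def d_def using c d by (blast intro: add_row_mat_in_Iwahori add_col_mat_in_Kmax)+
  moreover have "cleared_pivots (insert (i0, j0) P) A'"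
    using cleared_pivots_insert[OF cl i0 p] unfolding A'_def c_def d_def .
  ultimately show ?thesis
    using that i0 by blast
qed

lemma Iwahori_cleared_Kmax_decomposition:
  fixes A :: "'a mat3"
  assumes "invertible A" "cleared_pivots P A"
  shows "\<exists>L A' M P'. L \<in> Iwahori v \<and> M \<in> Kmax v \<and> A = L ** A' ** M
           \<and> cleared_pivots P' A' \<and> fst ` P' = UNIV"
  using assms
proof (induction "card (UNIV - fst ` P)" arbitrary: A P rule: less_induct)
  case less
  show ?case
  proof (cases "fst ` P = UNIV")
    case True
    then show ?thesis
      using less.prems mat_1_in_Iwahori
        Iwahori_subset_Kmax[of v] by fastforce
  next
    case False
    from pivot_step[OF less.prems this] obtain L A' M i0 j0 where
      step: "L \<in> Iwahori v" "M \<in> Kmax v" "A = L ** A' ** M" "invertible A'"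
        "cleared_pivots (insert (i0, j0) P) A'" "i0 \<notin> fst ` P" .
    have "card (UNIV - fst ` insert (i0, j0) P) < card (UNIV - fst ` P)"
      using step(6) by (intro psubset_card_mono) auto
    from less.hyps[OF this step(4,5)] obtain L' A'' M' P' where
      IH: "L' \<in> Iwahori v" "M' \<in> Kmax v" "A' = L' ** A'' ** M'" "cleared_pivots P' A''"
        "fst ` P' = UNIV"
      by blast
    have "A = (L ** L') ** A'' ** (M' ** M)"
      using step(3) IH(3) by (simp add: matrix_mul_assoc)
    moreover have "L ** L' \<in> Iwahori v" "M' ** M \<in> Kmax v"
      using Iwahori_mult[OF step(1) IH(1)]
        Kmax_mult[OF IH(2) step(2)] .
    ultimately show ?thesis
      using IH(4,5) by blast
  qed
qed

lemma Iwahori_monomial_Kmax_decomposition: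
  fixes g :: "'a mat3"
  assumes "invertible g"
  obtains L \<sigma> e M where "L \<in> Iwahori v" "M \<in> Kmax v" "bij \<sigma>" "\<And>i. e i \<noteq> 0"
    "g = L ** monomial_mat \<sigma> e ** M"
proof -
  have "cleared_pivots {} g" by (simp add: cleared_pivots_def)
  with Iwahori_cleared_Kmax_decomposition[OF assms] obtain L A M P
    where LM: "L \<in> Iwahori v" "M \<in> Kmax v" and g: "g = L ** A ** M"
      and cl: "cleared_pivots P A" "fst ` P = UNIV"
    by meson
  obtain \<sigma> e where "bij \<sigma>" "\<And>i. e i \<noteq> 0" "A = monomial_mat \<sigma> e"
    using cleared_pivots_monomial[OF cl] by blast
  then show ?thesis
    using that[OF LM] g by blast
qed

lemma monomial_mat_Iwahori_Kmax_equivalent: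
  fixes e f :: "3 \<Rightarrow> 'a"
  assumes "bij \<sigma>" "bij \<tau>" "\<And>i. e i \<noteq> 0" "\<And>i. f i \<noteq> 0" "\<And>i. v (e i) = v (f i)"
  obtains L M where "L \<in> Iwahori v" "M \<in> Kmax v" "monomial_mat \<sigma> e = L ** monomial_mat \<tau> f ** M"
proof
  show "monomial_mat id (\<lambda>i. e i / f i) \<in> Iwahori v"
    using assms(3-5) by (intro diagonal_unit_mat_in_Iwahori)
      (simp_all add: valuation_divide)
  show "monomial_mat (\<sigma> \<circ> inv \<tau>) (\<lambda>_. 1) \<in> Kmax v"
    using assms(1,2) valuation_one
    by (intro monomial_mat_in_Kmax bij_comp bij_imp_bij_inv) simp_all
  have "\<sigma> \<circ> inv \<tau> \<circ> \<tau> = \<sigma>"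
    using assms(2) by (simp add: fun_eq_iff bij_is_inj)
  then show "monomial_mat \<sigma> e
      = monomial_mat id (\<lambda>i. e i / f i) ** monomial_mat \<tau> f ** monomial_mat (\<sigma> \<circ> inv \<tau>) (\<lambda>_. 1)"
    using assms(4) by (simp add: monomial_mat_mult)
qed

end

section \<open>Elements of F' and the matrices lam(varpi)\<close>

definition F'_mat :: "'a::field \<Rightarrow> 'a \<Rightarrow> 'a \<Rightarrow> 'a \<Rightarrow> 'a mat3" where
  "F'_mat w a b c = (\<chi> i j. a * mat 1 $ i $ j + b * varpi'_mat w $ i $ j
                           + c * (varpi'_mat w ** varpi'_mat w) $ i $ j)"

lemma F'_units_eq: "F'_units w = {F'_mat w a b c | a b c. \<not> (a = 0 \<and> b = 0 \<and> c = 0)}"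
  unfolding F'_units_def F'_mat_def ..

(* The norm of a + b varpi' + c varpi'^2 from F' to F. *)
definition cubic_norm :: "'a::comm_ring_1 \<Rightarrow> 'a \<Rightarrow> 'a \<Rightarrow> 'a \<Rightarrow> 'a" where
  "cubic_norm w a b c = a ^ 3 + w * b ^ 3 + w\<^sup>2 * c ^ 3 - 3 * w * a * b * c"

lemma det_F'_mat: "det (F'_mat w a b c) = cubic_norm w a b c"
  by (simp add: F'_mat_def cubic_norm_def det_3 matrix_mult_3_entry varpi'_mat_def mat_def)
    (simp add: algebra_simps power2_eq_square power3_eq_cube)

(* Multiplication by varpi' maps a + b varpi' + c varpi'^2 to varpi c + a varpi' + b varpi'^2. *)
lemma cubic_norm_rotate: "cubic_norm w (w * c) a b = w * cubic_norm w a b c"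
  by (simp add: cubic_norm_def algebra_simps power2_eq_square power3_eq_cube)

lemma lam_mat_eq_monomial_mat:
  "lam_mat w (l1, l2, l3) = monomial_mat id (\<lambda>i. w powi (if i = 1 then l1 else if i = 2 then l2 else l3))"
  by (simp add: vec_eq_iff lam_mat_def monomial_mat_entry)

lemma invertible_lam_mat: "w \<noteq> 0 \<Longrightarrow> invertible (lam_mat w lam)"
  by (cases lam) (simp add: lam_mat_eq_monomial_mat invertible_monomial_mat)

definition cyclic_shift3 :: "3 \<Rightarrow> 3" where
  "cyclic_shift3 i = (if i = 1 then 3 else if i = 2 then 1 else 2)"

lemma bij_cyclic_shift3: "bij cyclic_shift3"
proof -
  have "inj cyclic_shift3" by (auto simp: inj_def forall_3 cyclic_shift3_def)
  then show ?thesis by (simp add: bij_def finite_UNIV_inj_surj)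
qed

lemma F'_unit_lam_mat_monomial:
  fixes w :: "'a::field" and m :: "3 \<Rightarrow> int"
  assumes w: "w \<noteq> 0"
  obtains lam f \<sigma> where "lam \<in> Sigma0" "f \<in> F'_units w" "bij \<sigma>"
    "f ** lam_mat w lam = monomial_mat \<sigma> (\<lambda>i. w powi m i)"
proof -
  define s where "s = m 1 + m 2 + m 3"
  define q where "q = s div 3"
  have "w powi q \<noteq> 0" using w by simp
  then have units: "F'_mat w (w powi q) 0 0 \<in> F'_units w" "F'_mat w 0 (w powi q) 0 \<in> F'_units w"
    "F'_mat w 0 0 (w powi q) \<in> F'_units w"
    unfolding F'_units_eq by blast+
  have pow: "w powi x * w powi y = w powi (x + y)" "w powi x * w = w powi (x + 1)"
    "w * w powi x = w powi (x + 1)" for x y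
    using w by (simp_all add: power_int_add)
  have "s = 3 * q + s mod 3" "0 \<le> s mod 3" "s mod 3 < 3"
    unfolding q_def by simp_all
  then consider "s = 3 * q" | "s = 3 * q + 1" | "s = 3 * q + 2"
    by linarith
  then show ?thesis
  proof cases
    case 1
    let ?lam = "(m 1 - q, m 2 - q, m 3 - q)"
    have "F'_mat w (w powi q) 0 0 ** lam_mat w ?lam = monomial_mat id (\<lambda>i. w powi m i)"
      by (simp add: vec_eq_iff forall_3 matrix_mult_3_entry F'_mat_def lam_mat_def
          monomial_mat_entry mat_def pow)
    then show ?thesis
      using that[of ?lam, OF _ units(1) bij_id] 1 by (simp add: Sigma0_def s_def)
  next
    case 2
    let ?lam = "(m 2 - q, m 3 - q, m 1 - q - 1)"
    have "F'_mat w 0 (w powi q) 0 ** lam_mat w ?lam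
        = monomial_mat cyclic_shift3 (\<lambda>i. w powi m i)"
      by (simp add: vec_eq_iff forall_3 matrix_mult_3_entry F'_mat_def lam_mat_def
          monomial_mat_entry varpi'_mat_def mat_def pow cyclic_shift3_def)
    then show ?thesis
      using that[of ?lam, OF _ units(2) bij_cyclic_shift3] 2 by (simp add: Sigma0_def s_def)
  next
    case 3
    let ?lam = "(m 3 - q, m 1 - q - 1, m 2 - q - 1)"
    have "F'_mat w 0 0 (w powi q) ** lam_mat w ?lam
        = monomial_mat (cyclic_shift3 \<circ> cyclic_shift3) (\<lambda>i. w powi m i)"
      by (simp add: vec_eq_iff forall_3 matrix_mult_3_entry F'_mat_def lam_mat_def
          monomial_mat_entry varpi'_mat_def mat_def pow cyclic_shift3_def)
    then show ?thesis
      using that[of ?lam, OF _ units(3) bij_comp[OF bij_cyclic_shift3 bij_cyclic_shift3]] 3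
      by (simp add: Sigma0_def s_def)
  qed
qed

context discretely_valued
begin

lemma cubic_norm_nonzero_if_first_dominant:
  assumes w: "w \<noteq> 0" "v w = 1" and "a \<noteq> 0"
    and "b = 0 \<or> 3 * v a < 1 + 3 * v b" and "c = 0 \<or> 3 * v a < 2 + 3 * v c"
  shows "cubic_norm w a b c \<noteq> 0"
proof -
  note val = valuation_mult valuation_power
  define y z t where "y = w * b ^ 3" and "z = w\<^sup>2 * c ^ 3" and "t = - (3 * w * a * b * c)"
  have y: "y = 0 \<or> 3 * v a < v y"
    unfolding y_def using assms(4) w by (cases "b = 0") (simp_all add: val)
  have z: "z = 0 \<or> 3 * v a < v z"
    unfolding z_def using assms(5) w by (cases "c = 0") (simp_all add: val)
  have t: "t = 0 \<or> 3 * v a < v t"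
  proof (cases "(3::'a) = 0 \<or> b = 0 \<or> c = 0")
    case False
    have "0 \<le> v 3"
      using of_nat_in_val_ring[of 3] False unfolding val_ring_def by simp
    then show ?thesis
      unfolding t_def using False assms w by (simp add: val valuation_uminus)
  qed (auto simp: t_def)
  have "y + z + t = 0 \<or> v (a ^ 3) < v (y + z + t)"
    using valuation_add_gt[OF valuation_add_gt[OF y z] t]
      \<open>a \<noteq> 0\<close> by (simp add: val)
  then have "a ^ 3 + (y + z + t) \<noteq> 0"
    using \<open>a \<noteq> 0\<close> by (intro add_nonzero_of_valuation_less) simp_all
  then show ?thesis
    by (simp add: cubic_norm_def y_def z_def t_def algebra_simps)
qed

lemma cubic_norm_nonzero:
  assumes w: "w \<noteq> 0" "v w = 1" and "\<not> (a = 0 \<and> b = 0 \<and> c = 0)"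
  shows "cubic_norm w a b c \<noteq> 0"
proof -
  note dominant = cubic_norm_nonzero_if_first_dominant[OF w]
  have val_w: "x \<noteq> 0 \<Longrightarrow> v (w * x) = 1 + v x" for x
    using w by (simp add: valuation_mult)
  have "3 * v a \<noteq> 1 + 3 * v b" "1 + 3 * v b \<noteq> 2 + 3 * v c" "3 * v a \<noteq> 2 + 3 * v c"
    by presburger+
  then consider
      "a \<noteq> 0" "b = 0 \<or> 3 * v a < 1 + 3 * v b" "c = 0 \<or> 3 * v a < 2 + 3 * v c"
    | "b \<noteq> 0" "a = 0 \<or> 1 + 3 * v b < 3 * v a" "c = 0 \<or> 1 + 3 * v b < 2 + 3 * v c"
    | "c \<noteq> 0" "a = 0 \<or> 2 + 3 * v c < 3 * v a" "b = 0 \<or> 2 + 3 * v c < 1 + 3 * v b"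
    using assms(3) by fastforce
  then show ?thesis
  proof cases
    case 1
    then show ?thesis by (rule dominant)
  next
    case 2
    have "cubic_norm w (w * b) (w * c) a \<noteq> 0"
      using 2 w by (intro dominant) (cases "c = 0"; auto simp: val_w)+
    then show ?thesis by (simp add: cubic_norm_rotate)
  next
    case 3
    have "cubic_norm w (w * c) a b \<noteq> 0"
      using 3 w by (intro dominant) (auto simp: val_w)+
    then show ?thesis by (simp add: cubic_norm_rotate)
  qed
qed

lemma invertible_F'_unit:
  assumes "w \<noteq> 0" "v w = 1" "f \<in> F'_units w"
  shows "invertible f"
  using assms cubic_norm_nonzero
  by (auto simp: F'_units_eq invertible_det_nz det_F'_mat)

lemma invertible_Iwahori_F'_lam_Kmax:
  assumes "w \<noteq> 0" "v w = 1" "k' \<in> Iwahori v" "f \<in> F'_units w" "k \<in> Kmax v"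
  shows "invertible (k' ** f ** lam_mat w lam ** k)"
proof -
  have "invertible k'" "invertible f" "invertible k"
    using assms Iwahori_subset_Kmax Kmax_invertible invertible_F'_unit by blast+
  then show ?thesis
    using invertible_lam_mat[OF assms(1)] by (simp add: invertible_mult)
qed

lemma Iwahori_F'_lam_Kmax_decomposition:
  fixes g :: "'a mat3"
  assumes w: "w \<noteq> 0" "v w = 1" and "invertible g"
  obtains k' f lam k where "k' \<in> Iwahori v" "f \<in> F'_units w" "lam \<in> Sigma0" "k \<in> Kmax v"
    "g = k' ** f ** lam_mat w lam ** k"
proof -
  obtain L \<sigma> e M where LM: "L \<in> Iwahori v" "M \<in> Kmax v" and "bij \<sigma>" "\<And>i. e i \<noteq> 0"
      and g: "g = L ** monomial_mat \<sigma> e ** M"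
    by (rule Iwahori_monomial_Kmax_decomposition[OF \<open>invertible g\<close>]) blast
  obtain lam f \<tau> where lam: "lam \<in> Sigma0" and f: "f \<in> F'_units w" and "bij \<tau>"
      and f_lam: "f ** lam_mat w lam = monomial_mat \<tau> (\<lambda>i. w powi v (e i))"
    using F'_unit_lam_mat_monomial[OF w(1)] .
  have "w powi v (e i) \<noteq> 0" "v (e i) = v (w powi v (e i))" for i
    using w by (simp_all add: valuation_power_int)
  then obtain L' M' where L'M': "L' \<in> Iwahori v" "M' \<in> Kmax v"
      and "monomial_mat \<sigma> e = L' ** monomial_mat \<tau> (\<lambda>i. w powi v (e i)) ** M'"
    using monomial_mat_Iwahori_Kmax_equivalent[OF \<open>bij \<sigma>\<close> \<open>bij \<tau>\<close>, of e] \<open>\<And>i. e i \<noteq> 0\<close>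
    by metis
  then have "g = (L ** L') ** f ** lam_mat w lam ** (M' ** M)"
    unfolding g f_lam[symmetric] by (simp add: matrix_mul_assoc)
  then show ?thesis
    using that lam f Iwahori_mult[OF LM(1) L'M'(1)] Kmax_mult[OF L'M'(2) LM(2)] by blast
qed

end

theorem lemma9p8:
  fixes v :: "'a::field_char_0 \<Rightarrow> int" and p :: nat and w :: 'a
  assumes "p_adic_field v p" and "p \<noteq> 2" and "p \<noteq> 3"
    and "uniformizer v w"
  shows "GL3 = (\<Union>lam\<in>Sigma0. {k' ** f ** lam_mat w lam ** k | k' f k.
                   k' \<in> Iwahori v \<and> f \<in> F'_units w \<and> k \<in> Kmax v})"
    (is "_ = ?cosets")
proof -
  interpret discretely_valued v
    using assms(1) unfolding p_adic_field_def by unfold_locales simp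
  have w: "w \<noteq> 0" "v w = 1" using assms(4) unfolding uniformizer_def by auto
  show ?thesis
    unfolding GL3_def
  proof (intro equalityI subsetI)
    fix g :: "'a mat3" assume "g \<in> {g. invertible g}"
    then have "invertible g" by simp
    obtain k' f lam k where "k' \<in> Iwahori v" "f \<in> F'_units w" "lam \<in> Sigma0" "k \<in> Kmax v"
        "g = k' ** f ** lam_mat w lam ** k"
      by (rule Iwahori_F'_lam_Kmax_decomposition[OF w \<open>invertible g\<close>]) blast
    then show "g \<in> ?cosets" by blast
  next
    fix g assume "g \<in> ?cosets"
    then show "g \<in> {g. invertible g}"
      using invertible_Iwahori_F'_lam_Kmax[OF w] by blast
  qed
qed

end
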